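(* Let $T$ be a tree on $[m]$ with depth-first walk $X$ and height process $H$, and let $\mathcal Q\subset\mathbb Z_{\ge0}\times\mathbb Z_{\ge0}$ be finite. Suppose $\mathcal Q\cap X=\mathcal Q\cap(H/2)$ and let $k=|\mathcal Q\cap X|$. Then, viewing $G^X=G^X(T,\mathcal Q)$ and $G^H=G^H(T,\mathcal Q)$ as metric spaces on their common vertex set with graph distance (rooted at vertex $1$), \[d_{GH}(G^X,G^H)\le k\big(\max_{0\le i<m}|X(i)-H(i)/2|+2\big).\]
   Context: Ordered depth-first search ${\bf oDFS}(T)$ for a tree $T$ on $[m]$ rooted at $1$: set $\mathcal O_0=(1)$ (ordered list), $\mathcal A_0=\emptyset$; for $i=0,\dots,m-1$ let $v_i$ be the first element of $\mathcal O_i$, $\mathcal N_i$ the neighbours of $v_i$ outside $\mathcal A_i\cup\mathcal O_i$, $\mathcal A_{i+1}=\mathcal A_i\cup\{v_i\}$, and $\mathcal O_{i+1}$ obtained by deleting $v_i$ from the front and placing $\mathcal N_i$ in increasing order at the front. Depth-first walk $X(i)=|\mathcal O_i|-1$; height process $H(i)=$ distance in $T$ from $1$ to $v_i$ ($0\le i<m$; both set to $0$ for $i\ge m$). For $S\subset\mathbb R^+\times\mathbb R^+$ and $f$, $S\cap f:=\{(x,y)\in S:0<y\le f(x)\}$. $G^X(T,\mathcal Q)$: add to $T$, for each $(i,j)\in\mathcal Q\cap X$, an edge between $v_i$ and the $j$-th vertex of $\mathcal O_i$ counted from the end of the list. $G^H(T,\mathcal Q)$: add to $T$, for each $(i,j)\in\mathcal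 Q$ with $0<2j\le H(i)$, an edge between $v_i$ and the vertex at distance $2j-1$ from the root on the path from the root to $v_i$ in $T$. Gromov–Hausdorff distance between rooted compact metric spaces $(X,\rho),(X',\rho')$: $d_{GH}=\inf\{d_H(\phi(X),\phi'(X'))\vee\delta(\phi(\rho),\phi'(\rho'))\}$ over all metric spaces $(M,\delta)$ and isometric embeddings $\phi:X\to M$, $\phi':X'\to M$, where $d_H$ is the Hausdorff distance. *)

theory Defs
  imports Complex_Main
begin

definition walk_of :: "nat set set \<Rightarrow> nat list \<Rightarrow> bool" where
  "walk_of E p \<longleftrightarrow> p \<noteq> [] \<and> (\<forall>i. Suc i < length p \<longrightarrow> {p ! i, p ! Suc i} \<in> E)"

definition gdist :: "nat set set \<Rightarrow> nat \<Rightarrow> nat \<Rightarrow> nat" where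
  "gdist E u v = (LEAST n. \<exists>p. walk_of E p \<and> hd p = u \<and> last p = v \<and> length p = Suc n)"

definition connected_on :: "nat set \<Rightarrow> nat set set \<Rightarrow> bool" where
  "connected_on V E \<longleftrightarrow> (\<forall>u\<in>V. \<forall>v\<in>V. \<exists>p. walk_of E p \<and> hd p = u \<and> last p = v)"

text \<open>A tree on [m] = {1..m}: a connected simple graph on {1..m} that is minimally connected
  (removing any edge disconnects it).  We require m \<ge> 1 since the tree is rooted at 1.\<close>
definition is_tree :: "nat \<Rightarrow> nat set set \<Rightarrow> bool" where
  "is_tree m E \<longleftrightarrow> 1 \<le> m
     \<and> E \<subseteq> {{u, v} | u v. u \<noteq> v \<and> u \<in> {1..m} \<and> v \<in> {1..m}}
     \<and> connected_on {1..m} E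
     \<and> (\<forall>e\<in>E. \<not> connected_on {1..m} (E - {e}))"

definition odfs_step :: "nat set set \<Rightarrow> nat list \<times> nat set \<Rightarrow> nat list \<times> nat set" where
  "odfs_step E = (\<lambda>(Os, A).
     let v = hd Os;
         N = sorted_list_of_set {w. {v, w} \<in> E \<and> w \<notin> A \<and> w \<notin> set Os}
     in (N @ tl Os, insert v A))"

definition odfs_state :: "nat set set \<Rightarrow> nat \<Rightarrow> nat list \<times> nat set" where
  "odfs_state E i = (odfs_step E ^^ i) ([1], {})"

definition odfs_O :: "nat set set \<Rightarrow> nat \<Rightarrow> nat list" where
  "odfs_O E i = fst (odfs_state E i)"

definition odfs_v :: "nat set set \<Rightarrow> nat \<Rightarrow> nat" where
  "odfs_v E i = hd (odfs_O E i)"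

definition dfs_X :: "nat \<Rightarrow> nat set set \<Rightarrow> nat \<Rightarrow> int" where
  "dfs_X m E i = (if i < m then int (length (odfs_O E i)) - 1 else 0)"

definition dfs_H :: "nat \<Rightarrow> nat set set \<Rightarrow> nat \<Rightarrow> nat" where
  "dfs_H m E i = (if i < m then gdist E 1 (odfs_v E i) else 0)"

definition under :: "(nat \<times> nat) set \<Rightarrow> (nat \<Rightarrow> real) \<Rightarrow> (nat \<times> nat) set" where
  "under S f = {(x, y) \<in> S. 0 < real y \<and> real y \<le> f x}"

definition tree_anc :: "nat \<Rightarrow> nat set set \<Rightarrow> nat \<Rightarrow> nat \<Rightarrow> nat" where
  "tree_anc m E v d = (THE w. w \<in> {1..m} \<and> gdist E 1 w = d \<and> gdist E 1 w + gdist E w v = gdist E 1 v)"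

definition GX :: "nat \<Rightarrow> nat set set \<Rightarrow> (nat \<times> nat) set \<Rightarrow> nat set set" where
  "GX m E Q = E \<union> {{odfs_v E i, rev (odfs_O E i) ! (j - 1)} | i j.
                     (i, j) \<in> under Q (\<lambda>x. real_of_int (dfs_X m E x))}"

definition GH :: "nat \<Rightarrow> nat set set \<Rightarrow> (nat \<times> nat) set \<Rightarrow> nat set set" where
  "GH m E Q = E \<union> {{odfs_v E i, tree_anc m E (odfs_v E i) (2 * j - 1)} | i j.
                     (i, j) \<in> Q \<and> 0 < 2 * j \<and> 2 * j \<le> dfs_H m E i}"

definition pseudometric_on :: "'c set \<Rightarrow> ('c \<Rightarrow> 'c \<Rightarrow> real) \<Rightarrow> bool" where
  "pseudometric_on S \<delta> \<longleftrightarrow>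
     (\<forall>x\<in>S. \<delta> x x = 0) \<and> (\<forall>x\<in>S. \<forall>y\<in>S. 0 \<le> \<delta> x y \<and> \<delta> x y = \<delta> y x) \<and>
     (\<forall>x\<in>S. \<forall>y\<in>S. \<forall>z\<in>S. \<delta> x z \<le> \<delta> x y + \<delta> y z)"

definition hausdorff_dist :: "('c \<Rightarrow> 'c \<Rightarrow> real) \<Rightarrow> 'c set \<Rightarrow> 'c set \<Rightarrow> real" where
  "hausdorff_dist \<delta> A B =
     max (SUP a\<in>A. INF b\<in>B. \<delta> a b) (SUP b\<in>B. INF a\<in>A. \<delta> a b)"

text \<open>Infimum over all ways of isometrically embedding both spaces in a common
  space; equivalently over all pseudometrics on the disjoint union extending both metrics
  (the image of the two embeddings in an ambient metric space M pulls back to such a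
  pseudometric, and conversely its metric quotient is such an M).\<close>
definition dGH :: "'a set \<Rightarrow> ('a \<Rightarrow> 'a \<Rightarrow> real) \<Rightarrow> 'a \<Rightarrow> 'b set \<Rightarrow> ('b \<Rightarrow> 'b \<Rightarrow> real) \<Rightarrow> 'b \<Rightarrow> real" where
  "dGH X d \<rho> X' d' \<rho>' = Inf {max (hausdorff_dist \<delta> (Inl ` X) (Inr ` X')) (\<delta> (Inl \<rho>) (Inr \<rho>')) | \<delta>.
       pseudometric_on (Inl ` X \<union> Inr ` X') \<delta> \<and>
       (\<forall>x\<in>X. \<forall>y\<in>X. \<delta> (Inl x) (Inl y) = d x y) \<and>
       (\<forall>x\<in>X'. \<forall>y\<in>X'. \<delta> (Inr x) (Inr y) = d' x y)}"

end

theory Submission imports Defs begin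

text \<open>G^X and G^H contain T and differ only in the k added edges. For a point (i, j), G^X joins
  v_i to the j-th entry w from the bottom of the stack O_i, and G^H joins v_i to the ancestor a of
  v_i at depth 2j - 1. The entry w was pushed when its parent p, an ancestor of v_i, was visited;
  the stack then held at most j entries, while at the visit of the child of p towards v_i it held
  more than j. Comparing X with H/2 at these two times puts the depth of p within 2M of 2j - 1,
  where M is the maximal discrepancy, so w lies within tree distance 2M + 1 of a. Exchanging one
  edge {v, w} for {v, a} changes graph distances by at most 1 + d_T(w, a), so the two graph
  metrics on [m] differ by at most k(2M + 2); finally, two metrics on one set that differ by at
  most D are at Gromov--Hausdorff distance at most D/2.\<close>

section \<open>Gromov--Hausdorff distance of two metrics on one set\<close>

lemma dGH_le_coupling:
  assumes "\<rho> \<in> X" "\<rho>' \<in> X'"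
    and "pseudometric_on (Inl ` X \<union> Inr ` X') \<delta>"
    and "\<forall>x\<in>X. \<forall>y\<in>X. \<delta> (Inl x) (Inl y) = d x y"
    and "\<forall>x\<in>X'. \<forall>y\<in>X'. \<delta> (Inr x) (Inr y) = d' x y"
  shows "dGH X d \<rho> X' d' \<rho>' \<le> max (hausdorff_dist \<delta> (Inl ` X) (Inr ` X')) (\<delta> (Inl \<rho>) (Inr \<rho>'))"
  unfolding dGH_def
proof (rule cInf_lower)
  show "bdd_below {max (hausdorff_dist \<delta> (Inl ` X) (Inr ` X')) (\<delta> (Inl \<rho>) (Inr \<rho>')) | \<delta>.
       pseudometric_on (Inl ` X \<union> Inr ` X') \<delta> \<and>
       (\<forall>x\<in>X. \<forall>y\<in>X. \<delta> (Inl x) (Inl y) = d x y) \<and> (\<forall>x\<in>X'. \<forall>y\<in>X'. \<delta> (Inr x) (Inr y) = d' x y)}"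
  proof (rule bdd_belowI[of _ 0], clarify)
    fix \<delta>' assume "pseudometric_on (Inl ` X \<union> Inr ` X') \<delta>'"
    then have "0 \<le> \<delta>' (Inl \<rho>) (Inr \<rho>')" using assms(1,2) by (auto simp: pseudometric_on_def)
    then show "0 \<le> max (hausdorff_dist \<delta>' (Inl ` X) (Inr ` X')) (\<delta>' (Inl \<rho>) (Inr \<rho>'))" by simp
  qed
qed (use assms(3-5) in blast)

text \<open>Two pseudometrics on V that differ by at most D are glued along the identity of V: the
  distance from a point of the first copy to a point of the second is the length of the shortest
  path that crosses over once, the crossing costing D/2.\<close>
locale metric_distortion =
  fixes V :: "'a set" and d\<^sub>1 d\<^sub>2 :: "'a \<Rightarrow> 'a \<Rightarrow> real" and D :: real
  assumes finite: "finite V" and nonempty: "V \<noteq> {}"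
    and pm\<^sub>1: "pseudometric_on V d\<^sub>1" and pm\<^sub>2: "pseudometric_on V d\<^sub>2"
    and distortion: "\<And>x y. x \<in> V \<Longrightarrow> y \<in> V \<Longrightarrow> \<bar>d\<^sub>1 x y - d\<^sub>2 x y\<bar> \<le> D"
begin

definition cross :: "'a \<Rightarrow> 'a \<Rightarrow> real" where
  "cross x y = Min ((\<lambda>z. d\<^sub>1 x z + D / 2 + d\<^sub>2 z y) ` V)"

definition glued :: "'a + 'a \<Rightarrow> 'a + 'a \<Rightarrow> real" where
  "glued p q = (case (p, q) of
      (Inl x, Inl y) \<Rightarrow> d\<^sub>1 x y | (Inr x, Inr y) \<Rightarrow> d\<^sub>2 x y
    | (Inl x, Inr y) \<Rightarrow> cross x y | (Inr x, Inl y) \<Rightarrow> cross y x)"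

lemma glued_simps [simp]:
  "glued (Inl x) (Inl y) = d\<^sub>1 x y" "glued (Inr x) (Inr y) = d\<^sub>2 x y"
  "glued (Inl x) (Inr y) = cross x y" "glued (Inr x) (Inl y) = cross y x"
  by (simp_all add: glued_def)

lemma pm\<^sub>1D: "x \<in> V \<Longrightarrow> d\<^sub>1 x x = 0" "x \<in> V \<Longrightarrow> y \<in> V \<Longrightarrow> 0 \<le> d\<^sub>1 x y"
  "x \<in> V \<Longrightarrow> y \<in> V \<Longrightarrow> d\<^sub>1 x y = d\<^sub>1 y x"
  "x \<in> V \<Longrightarrow> y \<in> V \<Longrightarrow> z \<in> V \<Longrightarrow> d\<^sub>1 x z \<le> d\<^sub>1 x y + d\<^sub>1 y z"
  using pm\<^sub>1 unfolding pseudometric_on_def by blast+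

lemma pm\<^sub>2D: "x \<in> V \<Longrightarrow> d\<^sub>2 x x = 0" "x \<in> V \<Longrightarrow> y \<in> V \<Longrightarrow> 0 \<le> d\<^sub>2 x y"
  "x \<in> V \<Longrightarrow> y \<in> V \<Longrightarrow> d\<^sub>2 x y = d\<^sub>2 y x"
  "x \<in> V \<Longrightarrow> y \<in> V \<Longrightarrow> z \<in> V \<Longrightarrow> d\<^sub>2 x z \<le> d\<^sub>2 x y + d\<^sub>2 y z"
  using pm\<^sub>2 unfolding pseudometric_on_def by blast+

lemma cross_le: "z \<in> V \<Longrightarrow> cross x y \<le> d\<^sub>1 x z + D / 2 + d\<^sub>2 z y"
  unfolding cross_def using finite by (intro Min_le) auto

lemma cross_attained: obtains z where "z \<in> V" "cross x y = d\<^sub>1 x z + D / 2 + d\<^sub>2 z y"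
proof -
  have "cross x y \<in> (\<lambda>z. d\<^sub>1 x z + D / 2 + d\<^sub>2 z y) ` V"
    unfolding cross_def using finite nonempty by (intro Min_in) auto
  then show ?thesis using that by blast
qed

lemma distortion_nonneg: "0 \<le> D"
  using nonempty distortion pm\<^sub>1D(1) pm\<^sub>2D(1) by fastforce

lemma cross_nonneg: "x \<in> V \<Longrightarrow> y \<in> V \<Longrightarrow> 0 \<le> cross x y"
  by (rule cross_attained[of x y]) (use pm\<^sub>1D(2) pm\<^sub>2D(2) distortion_nonneg in fastforce)

lemma cross_diag: "x \<in> V \<Longrightarrow> cross x x \<le> D / 2"
  using cross_le[of x x x] pm\<^sub>1D(1) pm\<^sub>2D(1) by simp

lemma d\<^sub>1_le_cross: assumes "x \<in> V" "x' \<in> V" "y \<in> V" shows "d\<^sub>1 x x' \<le> cross x y + cross x' y"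
proof -
  obtain z z' where z: "z \<in> V" "cross x y = d\<^sub>1 x z + D / 2 + d\<^sub>2 z y"
    and z': "z' \<in> V" "cross x' y = d\<^sub>1 x' z' + D / 2 + d\<^sub>2 z' y"
    using cross_attained by metis
  have "d\<^sub>1 x x' \<le> d\<^sub>1 x z + d\<^sub>1 z z' + d\<^sub>1 z' x'"
    using pm\<^sub>1D(4)[OF assms(1) z(1) z'(1)] pm\<^sub>1D(4)[OF assms(1) z'(1) assms(2)] by simp
  moreover have "d\<^sub>1 z z' \<le> d\<^sub>2 z y + d\<^sub>2 z' y + D"
    using distortion[OF z(1) z'(1)] pm\<^sub>2D(4)[OF z(1) assms(3) z'(1)] pm\<^sub>2D(3)[OF z'(1) assms(3)] by simp
  ultimately show ?thesis using z z' pm\<^sub>1D(3)[OF z'(1) assms(2)] by simp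
qed

lemma d\<^sub>2_le_cross: assumes "x \<in> V" "y \<in> V" "y' \<in> V" shows "d\<^sub>2 y y' \<le> cross x y + cross x y'"
proof -
  obtain z z' where z: "z \<in> V" "cross x y = d\<^sub>1 x z + D / 2 + d\<^sub>2 z y"
    and z': "z' \<in> V" "cross x y' = d\<^sub>1 x z' + D / 2 + d\<^sub>2 z' y'"
    using cross_attained by metis
  have "d\<^sub>2 y y' \<le> d\<^sub>2 y z + d\<^sub>2 z z' + d\<^sub>2 z' y'"
    using pm\<^sub>2D(4)[OF assms(2) z(1) z'(1)] pm\<^sub>2D(4)[OF assms(2) z'(1) assms(3)] by simp
  moreover have "d\<^sub>2 z z' \<le> d\<^sub>1 x z + d\<^sub>1 x z' + D"
    using distortion[OF z(1) z'(1)] pm\<^sub>1D(4)[OF z(1) assms(1) z'(1)] pm\<^sub>1D(3)[OF z(1) assms(1)] by simp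
  ultimately show ?thesis using z z' pm\<^sub>2D(3)[OF assms(2) z(1)] by simp
qed

lemma cross_le_d\<^sub>1:
  assumes "x \<in> V" "x' \<in> V"
  shows "cross x y \<le> d\<^sub>1 x x' + cross x' y" "cross x y \<le> cross x' y + d\<^sub>1 x' x"
proof -
  obtain z where z: "z \<in> V" "cross x' y = d\<^sub>1 x' z + D / 2 + d\<^sub>2 z y" using cross_attained by metis
  show "cross x y \<le> d\<^sub>1 x x' + cross x' y"
    using cross_le[OF z(1), of x y] pm\<^sub>1D(4)[OF assms z(1)] z(2) by simp
  then show "cross x y \<le> cross x' y + d\<^sub>1 x' x" using pm\<^sub>1D(3)[OF assms] by simp
qed

lemma cross_le_d\<^sub>2:
  assumes "y' \<in> V" "y \<in> V"
  shows "cross x y \<le> cross x y' + d\<^sub>2 y' y" "cross x y \<le> d\<^sub>2 y y' + cross x y'"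
proof -
  obtain z where z: "z \<in> V" "cross x y' = d\<^sub>1 x z + D / 2 + d\<^sub>2 z y'" using cross_attained by metis
  show "cross x y \<le> cross x y' + d\<^sub>2 y' y"
    using cross_le[OF z(1), of x y] pm\<^sub>2D(4)[OF z(1) assms] z(2) by simp
  then show "cross x y \<le> d\<^sub>2 y y' + cross x y'" using pm\<^sub>2D(3)[OF assms] by simp
qed

lemma pseudometric_glued: "pseudometric_on (Inl ` V \<union> Inr ` V) glued"
  unfolding pseudometric_on_def
proof (intro conjI ballI)
  fix p q r assume "p \<in> Inl ` V \<union> Inr ` V" "q \<in> Inl ` V \<union> Inr ` V" "r \<in> Inl ` V \<union> Inr ` V"
  then show "glued p r \<le> glued p q + glued q r"
    by (elim UnE imageE; simp add: pm\<^sub>1D(4) pm\<^sub>2D(4) d\<^sub>1_le_cross d\<^sub>2_le_cross cross_le_d\<^sub>1 cross_le_d\<^sub>2)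
qed (use pm\<^sub>1D pm\<^sub>2D cross_nonneg in auto)

lemma hausdorff_glued: "hausdorff_dist glued (Inl ` V) (Inr ` V) \<le> D / 2"
proof -
  have "(SUP a\<in>Inl ` V. INF b\<in>Inr ` V. glued a b) \<le> D / 2"
  proof (rule cSUP_least)
    fix a :: "'a + 'a" assume "a \<in> Inl ` V"
    then obtain x where x: "x \<in> V" "a = Inl x" by blast
    then show "(INF b\<in>Inr ` V. glued a b) \<le> D / 2"
      using cross_diag[OF x(1)] finite by (intro cINF_lower2[where x = "Inr x"]) auto
  qed (use nonempty in simp)
  moreover have "(SUP b\<in>Inr ` V. INF a\<in>Inl ` V. glued a b) \<le> D / 2"
  proof (rule cSUP_least)
    fix b :: "'a + 'a" assume "b \<in> Inr ` V"
    then obtain x where x: "x \<in> V" "b = Inr x" by blast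
    then show "(INF a\<in>Inl ` V. glued a b) \<le> D / 2"
      using cross_diag[OF x(1)] finite by (intro cINF_lower2[where x = "Inl x"]) auto
  qed (use nonempty in simp)
  ultimately show ?thesis unfolding hausdorff_dist_def by simp
qed

lemma dGH_le_half_distortion: "\<rho> \<in> V \<Longrightarrow> dGH V d\<^sub>1 \<rho> V d\<^sub>2 \<rho> \<le> D / 2"
  using dGH_le_coupling[OF _ _ pseudometric_glued] hausdorff_glued cross_diag by fastforce

end

section \<open>Walks and graph distance\<close>

definition reachable :: "nat set set \<Rightarrow> nat \<Rightarrow> nat \<Rightarrow> bool" where
  "reachable F x y \<longleftrightarrow> (\<exists>p. walk_of F p \<and> hd p = x \<and> last p = y)"

lemma walk_of_singleton [simp]: "walk_of F [x]"
  by (simp add: walk_of_def)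

lemma walk_of_Cons_Cons: "walk_of F (a # b # r) \<longleftrightarrow> {a, b} \<in> F \<and> walk_of F (b # r)"
  unfolding walk_of_def by (simp add: All_less_Suc2)

lemma walk_of_mono: "walk_of F p \<Longrightarrow> F \<subseteq> F' \<Longrightarrow> walk_of F' p"
  unfolding walk_of_def by blast

lemma walk_of_rev: assumes "walk_of F p" shows "walk_of F (rev p)"
  unfolding walk_of_def
proof (intro conjI allI impI)
  show "rev p \<noteq> []" using assms by (simp add: walk_of_def)
  fix i assume i: "Suc i < length (rev p)"
  then have "{p ! (length p - Suc (Suc i)), p ! Suc (length p - Suc (Suc i))} \<in> F"
    using assms by (auto simp: walk_of_def)
  moreover have "Suc (length p - Suc (Suc i)) = length p - Suc i" using i by simp
  ultimately show "{rev p ! i, rev p ! Suc i} \<in> F" using i by (simp add: rev_nth insert_commute)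
qed

lemma walk_of_take: "walk_of F p \<Longrightarrow> 0 < n \<Longrightarrow> walk_of F (take n p)"
  unfolding walk_of_def by auto

lemma walk_of_drop: "walk_of F p \<Longrightarrow> n < length p \<Longrightarrow> walk_of F (drop n p)"
  unfolding walk_of_def by auto

lemma walk_of_append:
  assumes p: "walk_of F p" and q: "walk_of F q" and pq: "last p = hd q"
  shows "walk_of F (p @ tl q)"
proof (cases q)
  case Nil then show ?thesis using q by (simp add: walk_of_def)
next
  case (Cons b r)
  have "walk_of F (p @ r)" if "walk_of F p" "walk_of F (last p # r)" for p
    using that
  proof (induction p rule: induct_list012)
    case (2 x) then show ?case by simp
  next
    case (3 x y zs)
    then have "{x, y} \<in> F" "walk_of F (y # zs)" "walk_of F (last (y # zs) # r)"
      by (simp_all add: walk_of_Cons_Cons)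
    then show ?case using "3.IH"(2) by (simp add: walk_of_Cons_Cons)
  qed (simp add: walk_of_def)
  from this[OF p] show ?thesis using q pq Cons by simp
qed

lemma walk_of_nonempty: "walk_of F p \<Longrightarrow> p \<noteq> []"
  by (simp add: walk_of_def)

lemma append_tl_glue:
  assumes "p \<noteq> []" "q \<noteq> []" "last p = hd q"
  shows "hd (p @ tl q) = hd p" "last (p @ tl q) = last q" "length (p @ tl q) = length p + length q - 1"
  using assms by (cases q; auto)+

lemma reachable_refl [simp]: "reachable F x x"
  unfolding reachable_def by (intro exI[of _ "[x]"]) simp

lemma reachable_sym: "reachable F x y \<Longrightarrow> reachable F y x"
  unfolding reachable_def using walk_of_rev by (fastforce simp: hd_rev last_rev)

lemma reachable_trans: assumes "reachable F x y" "reachable F y z" shows "reachable F x z"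
proof -
  obtain p q where p: "walk_of F p" "hd p = x" "last p = y" and q: "walk_of F q" "hd q = y" "last q = z"
    using assms unfolding reachable_def by blast
  then show ?thesis unfolding reachable_def
    using walk_of_append[OF p(1) q(1)] append_tl_glue[OF walk_of_nonempty[OF p(1)] walk_of_nonempty[OF q(1)]]
    by auto
qed

lemma reachable_mono: "reachable F x y \<Longrightarrow> F \<subseteq> F' \<Longrightarrow> reachable F' x y"
  unfolding reachable_def using walk_of_mono by blast

lemma reachable_if_connected_on: "connected_on V F \<Longrightarrow> x \<in> V \<Longrightarrow> y \<in> V \<Longrightarrow> reachable F x y"
  unfolding connected_on_def reachable_def by blast

lemma gdist_le_length: "walk_of F p \<Longrightarrow> gdist F (hd p) (last p) \<le> length p - 1"
  unfolding gdist_def by (rule Least_le) (auto simp: walk_of_def)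

lemma shortest_walk:
  assumes "reachable F x y"
  obtains p where "walk_of F p" "hd p = x" "last p = y" "length p = Suc (gdist F x y)"
proof -
  obtain p where p: "walk_of F p" "hd p = x" "last p = y" using assms unfolding reachable_def by blast
  then have "\<exists>n p. walk_of F p \<and> hd p = x \<and> last p = y \<and> length p = Suc n"
    by (intro exI[of _ "length p - 1"] exI[of _ p]) (auto simp: walk_of_def)
  from LeastI_ex[OF this] show ?thesis using that unfolding gdist_def by blast
qed

lemma gdist_refl [simp]: "gdist F x x = 0"
  using gdist_le_length[of F "[x]"] by simp

lemma gdist_triangle:
  assumes "reachable F x y" "reachable F y z"
  shows "gdist F x z \<le> gdist F x y + gdist F y z"
proof -
  obtain p where p: "walk_of F p" "hd p = x" "last p = y" "length p = Suc (gdist F x y)"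
    using shortest_walk[OF assms(1)] .
  obtain q where q: "walk_of F q" "hd q = y" "last q = z" "length q = Suc (gdist F y z)"
    using shortest_walk[OF assms(2)] .
  then show ?thesis
    using gdist_le_length[OF walk_of_append[OF p(1) q(1)]] append_tl_glue[of p q]
      walk_of_nonempty[OF p(1)] walk_of_nonempty[OF q(1)] p q by simp
qed

lemma gdist_sym: assumes "reachable F x y" shows "gdist F x y = gdist F y x"
proof -
  have "gdist F b a \<le> gdist F a b" if ab: "reachable F a b" for a b
  proof -
    obtain p where p: "walk_of F p" "hd p = a" "last p = b" "length p = Suc (gdist F a b)"
      using shortest_walk[OF ab] .
    show ?thesis using gdist_le_length[OF walk_of_rev[OF p(1)]] p by (simp add: hd_rev last_rev)
  qed
  then show ?thesis using assms reachable_sym by (simp add: antisym)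
qed

lemma gdist_antimono:
  assumes "reachable F x y" "F \<subseteq> F'"
  shows "gdist F' x y \<le> gdist F x y"
proof -
  obtain p where p: "walk_of F p" "hd p = x" "last p = y" "length p = Suc (gdist F x y)"
    using shortest_walk[OF assms(1)] .
  show ?thesis using gdist_le_length[OF walk_of_mono[OF p(1) assms(2)]] p by simp
qed

lemma pseudometric_gdist:
  assumes "connected_on V F"
  shows "pseudometric_on V (\<lambda>x y. real (gdist F x y))"
  unfolding pseudometric_on_def
proof (intro conjI ballI)
  fix x y z assume "x \<in> V" "y \<in> V" "z \<in> V"
  then show "real (gdist F x z) \<le> real (gdist F x y) + real (gdist F y z)"
    using gdist_triangle reachable_if_connected_on[OF assms] by (metis of_nat_add of_nat_le_iff)
next
  fix x y assume "x \<in> V" "y \<in> V"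
  then show "real (gdist F x y) = real (gdist F y x)"
    using gdist_sym reachable_if_connected_on[OF assms] by metis
qed simp_all

lemma walk_lipschitz:
  fixes f :: "nat \<Rightarrow> int"
  assumes "\<And>a b. {a, b} \<in> F \<Longrightarrow> \<bar>f a - f b\<bar> \<le> 1" "walk_of F p"
  shows "\<bar>f (hd p) - f (last p)\<bar> \<le> int (length p) - 1"
  using assms(2)
proof (induction p rule: induct_list012)
  case (3 x y zs)
  then have "\<bar>f x - f y\<bar> \<le> 1" "\<bar>f y - f (last (y # zs))\<bar> \<le> int (length (y # zs)) - 1"
    using assms(1) by (simp_all add: walk_of_Cons_Cons)
  then have "\<bar>f x - f (last (y # zs))\<bar> \<le> int (length (y # zs))" by linarith
  then show ?case by simp
qed (simp_all add: walk_of_def)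

lemma gdist_lipschitz:
  fixes f :: "nat \<Rightarrow> int"
  assumes "\<And>a b. {a, b} \<in> F \<Longrightarrow> \<bar>f a - f b\<bar> \<le> 1" "reachable F x y"
  shows "\<bar>f x - f y\<bar> \<le> int (gdist F x y)"
proof -
  obtain p where p: "walk_of F p" "hd p = x" "last p = y" "length p = Suc (gdist F x y)"
    using shortest_walk[OF assms(2)] .
  show ?thesis using walk_lipschitz[OF assms(1) p(1)] p by simp
qed

lemma shortest_walk_distinct:
  assumes "walk_of F p" "length p = Suc (gdist F (hd p) (last p))"
  shows "distinct p"
proof (rule ccontr)
  assume "\<not> distinct p"
  then obtain i j where ij: "i < j" "j < length p" "p ! i = p ! j"
    by (metis distinct_conv_nth linorder_neqE_nat)
  let ?a = "take (Suc i) p" and ?b = "drop j p"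
  have a: "walk_of F ?a" "hd ?a = hd p" "last ?a = p ! i" "?a \<noteq> []"
    using walk_of_take[OF assms(1), of "Suc i"] hd_take[of "Suc i" p] ij
    by (simp_all add: take_Suc_conv_app_nth)
  have b: "walk_of F ?b" "hd ?b = p ! j" "last ?b = last p" "?b \<noteq> []"
    using walk_of_drop[OF assms(1) ij(2)] ij by (simp_all add: hd_drop_conv_nth last_drop)
  have "gdist F (hd p) (last p) \<le> length (?a @ tl ?b) - 1"
    using gdist_le_length[OF walk_of_append[OF a(1) b(1)]] append_tl_glue[OF a(4) b(4)] a b ij
    by simp
  also have "\<dots> < length p - 1" using append_tl_glue(3)[OF a(4) b(4)] a b ij by simp
  finally show False using assms(2) by simp
qed

section \<open>Exchanging edges\<close>

lemma connected_on_mono: "connected_on V E \<Longrightarrow> E \<subseteq> F \<Longrightarrow> connected_on V F"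
  unfolding connected_on_def using walk_of_mono by blast

lemma distinct_walk_edge_unique:
  assumes "distinct p" "Suc k < length p" "Suc l < length p"
    and "{p ! l, p ! Suc l} = {p ! k, p ! Suc k}"
  shows "l = k"
  using assms nth_eq_iff_index_eq[OF assms(1)] by (auto simp: doubleton_eq_iff)

lemma walk_of_avoiding:
  assumes "walk_of F p" "F \<subseteq> F' \<union> {e}" "\<And>l. Suc l < length p \<Longrightarrow> {p ! l, p ! Suc l} \<noteq> e"
  shows "walk_of F' p"
  using assms unfolding walk_of_def by blast

lemma gdist_le_edge_detour:
  assumes "{v, a} \<in> F" "E \<subseteq> F" "connected_on V E" "a \<in> V" "w \<in> V"
  shows "gdist F v w \<le> 1 + gdist E a w"
proof -
  have "reachable F v a" using gdist_le_length[of F "[v, a]"] assms(1)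
    unfolding reachable_def by (intro exI[of _ "[v, a]"]) (simp add: walk_of_def)
  moreover have "gdist F v a \<le> 1" using gdist_le_length[of F "[v, a]"] assms(1) by (simp add: walk_of_def)
  moreover have aw: "reachable E a w" using reachable_if_connected_on assms(3-5) .
  moreover have "gdist F a w \<le> gdist E a w" using gdist_antimono[OF aw assms(2)] .
  ultimately show ?thesis using gdist_triangle[of F v a w] reachable_mono[OF aw assms(2)] by linarith
qed

text \<open>A shortest walk is a path, so it crosses the edge \<open>{v, w}\<close> at most once; that crossing is
  replaced by a shortest detour.\<close>
lemma gdist_exchange_edge:
  assumes sub: "F \<subseteq> F' \<union> {{v, w}}" and conn: "connected_on V F" "connected_on V F'"
    and V: "x \<in> V" "y \<in> V" "v \<in> V" "w \<in> V"
  shows "gdist F' x y \<le> gdist F x y + gdist F' v w"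
proof -
  have reach: "reachable F' s t" if "s \<in> V" "t \<in> V" for s t
    using reachable_if_connected_on[OF conn(2) that] .
  obtain p where p: "walk_of F p" "hd p = x" "last p = y" "length p = Suc (gdist F x y)"
    using shortest_walk[OF reachable_if_connected_on[OF conn(1) V(1,2)]] .
  have dp: "distinct p" using shortest_walk_distinct[OF p(1)] p by simp
  show ?thesis
  proof (cases "\<exists>k. Suc k < length p \<and> {p ! k, p ! Suc k} = {v, w}")
    case False
    then have "walk_of F' p" using walk_of_avoiding[OF p(1) sub] by blast
    then show ?thesis using gdist_le_length[of F' p] p by simp
  next
    case True
    then obtain k where k: "Suc k < length p" "{p ! k, p ! Suc k} = {v, w}" by blast
    have avoid: "{p ! l, p ! Suc l} \<noteq> {v, w}" if "Suc l < length p" "l \<noteq> k" for l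
      using distinct_walk_edge_unique[OF dp k(1) that(1)] k(2) that(2) by auto
    have kV: "p ! k \<in> V" "p ! Suc k \<in> V" using k(2) V by (auto simp: doubleton_eq_iff)
    have "walk_of F' (take (Suc k) p)"
      by (rule walk_of_avoiding[OF walk_of_take[OF p(1)] sub]) (use avoid in auto)
    then have d1: "gdist F' x (p ! k) \<le> k"
      using gdist_le_length[of F' "take (Suc k) p"] hd_take[of "Suc k" p] p(2) k(1)
      by (simp add: take_Suc_conv_app_nth del: hd_take)
    have "walk_of F' (drop (Suc k) p)"
      by (rule walk_of_avoiding[OF walk_of_drop[OF p(1) k(1)] sub]) (use avoid in auto)
    then have d3: "gdist F' (p ! Suc k) y \<le> length p - Suc k - 1"
      using gdist_le_length[of F' "drop (Suc k) p"] p(3) k(1) by (simp add: hd_drop_conv_nth last_drop)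
    have d2: "gdist F' (p ! k) (p ! Suc k) = gdist F' v w"
      using k(2) gdist_sym[OF reach[OF V(3,4)]] by (auto simp: doubleton_eq_iff)
    have "gdist F' x y \<le> gdist F' x (p ! k) + gdist F' (p ! k) (p ! Suc k) + gdist F' (p ! Suc k) y"
      using gdist_triangle[OF reach[OF V(1) kV(1)] reach[OF kV(1) V(2)]]
        gdist_triangle[OF reach[OF kV] reach[OF kV(2) V(2)]] by linarith
    then show ?thesis using d1 d2 d3 p(4) k(1) by linarith
  qed
qed

lemma gdist_exchange_edges:
  fixes c :: real and v w a :: "'s \<Rightarrow> nat"
  assumes S: "finite S" and E: "connected_on V E"
    and V: "\<And>s. s \<in> S \<Longrightarrow> v s \<in> V \<and> w s \<in> V \<and> a s \<in> V"
    and c: "\<And>s. s \<in> S \<Longrightarrow> 1 + real (gdist E (w s) (a s)) \<le> c"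
    and xy: "x \<in> V" "y \<in> V"
  shows "\<bar>real (gdist (E \<union> (\<lambda>s. {v s, w s}) ` S) x y) - real (gdist (E \<union> (\<lambda>s. {v s, a s}) ` S) x y)\<bar>
     \<le> c * real (card S)"
proof -
  define G where "G T = E \<union> (\<lambda>s. {v s, a s}) ` T \<union> (\<lambda>s. {v s, w s}) ` (S - T)" for T
  have conn: "connected_on V (G T)" for T by (rule connected_on_mono[OF E]) (auto simp: G_def)
  have "\<bar>real (gdist (G {}) x y) - real (gdist (G T) x y)\<bar> \<le> c * real (card T)"
    if "finite T" "T \<subseteq> S" for T
    using that
  proof (induction T rule: finite_subset_induct')
    case (insert s T)
    have s: "v s \<in> V" "w s \<in> V" "a s \<in> V" using V insert.hyps(2) by auto
    have sym: "gdist E (a s) (w s) = gdist E (w s) (a s)"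
      using gdist_sym[OF reachable_if_connected_on[OF E s(3,2)]] .
    have "gdist (G T) x y \<le> gdist (G (insert s T)) x y + gdist (G T) (v s) (a s)"
      by (rule gdist_exchange_edge[OF _ conn conn xy s(1,3)]) (auto simp: G_def)
    moreover have "gdist (G T) (v s) (a s) \<le> 1 + gdist E (w s) (a s)"
      using insert.hyps(2,4) s by (intro gdist_le_edge_detour[OF _ _ E]) (auto simp: G_def)
    moreover have "gdist (G (insert s T)) x y \<le> gdist (G T) x y + gdist (G (insert s T)) (v s) (w s)"
      by (rule gdist_exchange_edge[OF _ conn conn xy s(1,2)]) (auto simp: G_def)
    moreover have "gdist (G (insert s T)) (v s) (w s) \<le> 1 + gdist E (a s) (w s)"
      using s by (intro gdist_le_edge_detour[OF _ _ E]) (auto simp: G_def)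
    ultimately have "\<bar>real (gdist (G T) x y) - real (gdist (G (insert s T)) x y)\<bar> \<le> c"
      using c[OF insert.hyps(2)] sym by linarith
    then show ?case using insert by (simp add: algebra_simps)
  qed simp
  moreover have "G {} = E \<union> (\<lambda>s. {v s, w s}) ` S" "G S = E \<union> (\<lambda>s. {v s, a s}) ` S"
    unfolding G_def by auto
  ultimately show ?thesis using S by (metis order_refl)
qed

section \<open>Ordered depth-first search of a tree\<close>

locale odfs_tree =
  fixes m :: nat and E :: "nat set set"
  assumes tree: "is_tree m E"
begin

abbreviation "V \<equiv> {1..m}"
abbreviation "stack \<equiv> odfs_O E"
abbreviation "cur \<equiv> odfs_v E"

definition visited :: "nat \<Rightarrow> nat set" where
  "visited i = snd (odfs_state E i)"

definition fresh :: "nat \<Rightarrow> nat set" where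
  "fresh i = {w. {cur i, w} \<in> E \<and> w \<notin> visited i \<and> w \<notin> set (stack i)}"

lemma m_pos: "1 \<le> m"
  using tree by (simp add: is_tree_def)

lemma edge_in_V: assumes "{a, b} \<in> E" shows "a \<in> V" "b \<in> V"
proof -
  have "E \<subseteq> {{u, v} | u v. u \<noteq> v \<and> u \<in> V \<and> v \<in> V}" using tree by (simp add: is_tree_def)
  then obtain u v where "{a, b} = {u, v}" "u \<in> V" "v \<in> V" using assms by blast
  then show "a \<in> V" "b \<in> V" by (auto simp: doubleton_eq_iff)
qed

lemma connected: "connected_on V E"
  using tree by (simp add: is_tree_def)

lemma finite_fresh: "finite (fresh i)"
  by (rule finite_subset[of _ V]) (auto simp: fresh_def dest: edge_in_V)

lemma cur_eq_hd: "cur i = hd (stack i)"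
  by (simp add: odfs_v_def)

lemma odfs_0: "stack 0 = [1]" "visited 0 = {}" "cur 0 = 1"
  by (simp_all add: odfs_v_def odfs_O_def visited_def odfs_state_def)

lemma odfs_Suc:
  "stack (Suc i) = sorted_list_of_set (fresh i) @ tl (stack i)"
  "visited (Suc i) = insert (cur i) (visited i)"
proof -
  obtain Os A where st: "odfs_state E i = (Os, A)" by (cases "odfs_state E i")
  have "odfs_state E (Suc i) = odfs_step E (odfs_state E i)" by (simp add: odfs_state_def)
  then show "stack (Suc i) = sorted_list_of_set (fresh i) @ tl (stack i)"
      "visited (Suc i) = insert (cur i) (visited i)"
    using st by (simp_all add: odfs_step_def Let_def odfs_O_def visited_def odfs_v_def fresh_def)
qed

lemma V_subset_closed:
  assumes "1 \<in> S" "\<And>a w. a \<in> S \<Longrightarrow> {a, w} \<in> E \<Longrightarrow> w \<in> S"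
  shows "V \<subseteq> S"
proof
  fix u assume "u \<in> V"
  then obtain p where p: "walk_of E p" "hd p = 1" "last p = u"
    using reachable_if_connected_on[OF connected, of 1 u] m_pos unfolding reachable_def by auto
  have "p ! k \<in> S" if "k < length p" for k
    using that
  proof (induction k)
    case 0 then show ?case using p assms(1) by (cases p) auto
  next
    case (Suc k)
    then have "{p ! k, p ! Suc k} \<in> E" using p(1) by (simp add: walk_of_def)
    then show ?case using Suc assms(2) by simp
  qed
  then show "u \<in> S"
    using p(3) walk_of_nonempty[OF p(1)] by (metis last_conv_nth diff_less length_greater_0_conv zero_less_one)
qed

definition stack_inv :: "nat \<Rightarrow> bool" where
  "stack_inv i \<longleftrightarrow> distinct (stack i) \<and> set (stack i) \<inter> visited i = {} \<and> set (stack i) \<subseteq> V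
     \<and> visited i \<subseteq> V \<and> visited i = cur ` {..<i}
     \<and> (\<forall>a\<in>visited i. \<forall>w. {a, w} \<in> E \<longrightarrow> w \<in> visited i \<union> set (stack i))
     \<and> 1 \<in> visited i \<union> set (stack i)"

lemma stack_inv_0: "stack_inv 0"
  using m_pos by (simp add: stack_inv_def odfs_0)

lemma stack_nonempty_if_inv: assumes "stack_inv i" "i < m" shows "stack i \<noteq> []"
proof
  assume "stack i = []"
  then have "V \<subseteq> visited i" using assms(1) by (intro V_subset_closed) (auto simp: stack_inv_def)
  then have "card V \<le> card (visited i)" using assms(1) by (intro card_mono) (auto simp: stack_inv_def)
  also have "\<dots> \<le> i" using assms(1) card_image_le[of "{..<i}" cur] by (simp add: stack_inv_def)
  finally show False using assms(2) by simp
qed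

lemma stack_inv_Suc: assumes I: "stack_inv i" and ne: "stack i \<noteq> []" shows "stack_inv (Suc i)"
proof -
  have sO: "set (stack i) = insert (cur i) (set (tl (stack i)))"
    using ne by (cases "stack i") (auto simp: cur_eq_hd)
  have dtl: "distinct (tl (stack i))" "cur i \<notin> set (tl (stack i))"
    using I ne by (cases "stack i"; simp add: stack_inv_def cur_eq_hd)+
  have sN: "set (sorted_list_of_set (fresh i)) = fresh i" using finite_fresh by simp
  have "fresh i \<subseteq> V" by (auto simp: fresh_def dest: edge_in_V)
  moreover have "fresh i \<inter> (visited i \<union> set (stack i)) = {}" by (auto simp: fresh_def)
  moreover have "w \<in> visited i \<union> set (stack i) \<or> w \<in> fresh i"
    if a: "a \<in> insert (cur i) (visited i)" and e: "{a, w} \<in> E" for a w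
  proof (cases "a = cur i")
    case True then show ?thesis using e by (auto simp: fresh_def)
  next
    case False then show ?thesis using a e I unfolding stack_inv_def by blast
  qed
  ultimately show ?thesis
    using I sO dtl sN finite_fresh unfolding stack_inv_def odfs_Suc
    by (auto simp: lessThan_Suc)
qed

lemma stack_inv: "i \<le> m \<Longrightarrow> stack_inv i"
proof (induction i)
  case (Suc i)
  then show ?case using stack_inv_Suc stack_nonempty_if_inv by simp
qed (rule stack_inv_0)

lemma stack_nonempty: "i < m \<Longrightarrow> stack i \<noteq> []"
  using stack_inv stack_nonempty_if_inv by simp

lemma stack_invD:
  assumes "i \<le> m"
  shows "set (stack i) \<inter> visited i = {}" "set (stack i) \<subseteq> V" "visited i = cur ` {..<i}"
    "1 \<in> visited i \<union> set (stack i)"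
  using stack_inv[OF assms] unfolding stack_inv_def by blast+

lemma cur_in_stack: "i < m \<Longrightarrow> cur i \<in> set (stack i)"
  using stack_nonempty by (simp add: cur_eq_hd)

lemma cur_in_V: "i < m \<Longrightarrow> cur i \<in> V"
  using cur_in_stack[of i] stack_invD(2)[of i] by auto

lemma cur_not_visited: "i < m \<Longrightarrow> cur i \<notin> visited i"
  using cur_in_stack[of i] stack_invD(1)[of i] by auto

lemma cur_visited_later: "i < j \<Longrightarrow> j \<le> m \<Longrightarrow> cur i \<in> visited j"
  using stack_invD(3) by auto

lemma inj_on_cur: "inj_on cur {..<m}"
proof (rule inj_onI)
  fix i j assume ij: "i \<in> {..<m}" "j \<in> {..<m}" "cur i = cur j"
  show "i = j"
    using cur_visited_later[of i j] cur_visited_later[of j i] cur_not_visited ij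
    by (metis lessThan_iff less_imp_le_nat linorder_neqE_nat)
qed

lemma cur_image: "cur ` {..<m} = V"
proof -
  have "cur ` {..<m} \<subseteq> V" using cur_in_V by auto
  moreover have "card (cur ` {..<m}) = card V" using card_image[OF inj_on_cur] by simp
  ultimately show ?thesis by (intro card_subset_eq) auto
qed

definition time :: "nat \<Rightarrow> nat" where
  "time x = inv_into {..<m} cur x"

lemma time_less: "x \<in> V \<Longrightarrow> time x < m"
  unfolding time_def using cur_image by (metis inv_into_into lessThan_iff)

lemma cur_time: "x \<in> V \<Longrightarrow> cur (time x) = x"
  unfolding time_def using cur_image by (metis f_inv_into_f)

lemma time_cur: "i < m \<Longrightarrow> time (cur i) = i"
  unfolding time_def using inj_on_cur by (simp add: inv_into_f_f)

lemma seen_mono: "i \<le> j \<Longrightarrow> j \<le> m \<Longrightarrow> visited i \<union> set (stack i) \<subseteq> visited j \<union> set (stack j)"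
proof (induction j rule: dec_induct)
  case (step j)
  have "set (stack j) = insert (cur j) (set (tl (stack j)))"
    using stack_nonempty[of j] step by (cases "stack j") (auto simp: cur_eq_hd)
  then show ?case using step by (auto simp: odfs_Suc)
qed simp

lemma fresh_facts:
  assumes "i < m" "x \<in> fresh i"
  shows "x \<in> set (stack (Suc i))" "x \<notin> visited i \<union> set (stack i)" "{cur i, x} \<in> E" "x \<in> V" "x \<noteq> 1"
proof -
  show "x \<in> set (stack (Suc i))" using assms finite_fresh by (simp add: odfs_Suc)
  show x: "x \<notin> visited i \<union> set (stack i)" "{cur i, x} \<in> E" using assms by (auto simp: fresh_def)
  then show "x \<in> V" by (auto dest: edge_in_V)
  show "x \<noteq> 1" using stack_invD(4)[of i] assms x by auto
qed

lemma fresh_unique: assumes "i < m" "j < m" "x \<in> fresh i" "x \<in> fresh j" shows "i = j"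
proof -
  have "x \<in> visited j \<union> set (stack j)" if "i < j" "i < m" "j < m" "x \<in> fresh i" for i j
    using seen_mono[of "Suc i" j] fresh_facts(1)[of i x] that by auto
  then show ?thesis using assms fresh_facts(2) by (metis linorder_neqE_nat)
qed

lemma fresh_exists: assumes "x \<in> V" "x \<noteq> 1" shows "\<exists>n<time x. x \<in> fresh n"
proof -
  have "x \<in> set (stack (time x))" using cur_in_stack[OF time_less] cur_time assms(1) by metis
  moreover have "x \<notin> set (stack 0)" using assms by (simp add: odfs_0)
  ultimately obtain n where n: "n < time x" "x \<notin> set (stack n)" "x \<in> set (stack (Suc n))"
    using ex_least_nat_less[of "\<lambda>n. x \<in> set (stack n)"] by auto
  have "set (tl (stack n)) \<subseteq> set (stack n)" by (cases "stack n") auto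
  then have "x \<in> fresh n" using n finite_fresh by (auto simp: odfs_Suc)
  then show ?thesis using n by blast
qed

definition discovery :: "nat \<Rightarrow> nat" where
  "discovery x = (THE n. n < m \<and> x \<in> fresh n)"

definition parent :: "nat \<Rightarrow> nat" where
  "parent x = cur (discovery x)"

lemma discovery:
  assumes "x \<in> V" "x \<noteq> 1"
  shows "discovery x < time x" "x \<in> fresh (discovery x)"
proof -
  obtain n where n: "n < time x" "x \<in> fresh n" using fresh_exists[OF assms] by blast
  have "discovery x = n" unfolding discovery_def
    using n time_less[OF assms(1)] fresh_unique by (intro the_equality) auto
  then show "discovery x < time x" "x \<in> fresh (discovery x)" using n by auto
qed

lemma parent_eq: assumes "i < m" "x \<in> fresh i" shows "parent x = cur i"
proof -
  have x: "x \<in> V" "x \<noteq> 1" using fresh_facts[OF assms] by auto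
  have "discovery x < m" using discovery(1)[OF x] time_less[OF x(1)] by simp
  then have "discovery x = i" using fresh_unique[OF _ assms(1) discovery(2)[OF x] assms(2)] by simp
  then show ?thesis by (simp add: parent_def)
qed

lemma parent:
  assumes "x \<in> V" "x \<noteq> 1"
  shows "{parent x, x} \<in> E" "parent x \<in> V" "time (parent x) = discovery x" "time (parent x) < time x"
proof -
  have d: "discovery x < m" using discovery(1)[OF assms] time_less[OF assms(1)] by simp
  show e: "{parent x, x} \<in> E" using fresh_facts(3)[OF d discovery(2)[OF assms]] by (simp add: parent_def)
  then show "parent x \<in> V" by (auto dest: edge_in_V)
  show "time (parent x) = discovery x" using time_cur[OF d] by (simp add: parent_def)
  then show "time (parent x) < time x" using discovery(1)[OF assms] by simp
qed

end

subsection \<open>The DFS tree: parents, depth and ancestors\<close>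

context odfs_tree begin

function depth :: "nat \<Rightarrow> nat" where
  "depth x = (if x \<in> V \<and> x \<noteq> 1 then Suc (depth (parent x)) else 0)"
  by auto
termination
proof (relation "measure time")
  fix x assume "x \<in> V \<and> x \<noteq> 1"
  then show "(parent x, x) \<in> measure time" using parent(4) by simp
qed simp

declare depth.simps [simp del]

lemma depth_root [simp]: "depth (Suc 0) = 0"
  by (simp add: depth.simps)

lemma depth_parent: "x \<in> V \<Longrightarrow> x \<noteq> 1 \<Longrightarrow> depth x = Suc (depth (parent x))"
  by (simp add: depth.simps)

lemma depth_eq_0: "x \<in> V \<Longrightarrow> depth x = 0 \<Longrightarrow> x = 1"
  using depth_parent by fastforce

lemma reachable_edge: "{a, b} \<in> F \<Longrightarrow> reachable F a b"
  unfolding reachable_def by (intro exI[of _ "[a, b]"]) (simp add: walk_of_def)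

lemma reachable_root:
  assumes "x \<in> V" "\<And>y. y \<in> V \<Longrightarrow> y \<noteq> 1 \<Longrightarrow> {parent y, y} \<in> F"
  shows "reachable F x 1"
  using assms(1)
proof (induction x rule: depth.induct)
  case (1 x)
  show ?case
  proof (cases "x = 1")
    case False
    then have "reachable F x (parent x)" using assms(2)[OF "1.prems"] reachable_edge
      by (metis insert_commute)
    then show ?thesis using 1 False parent(2) reachable_trans by blast
  qed simp
qed

text \<open>Minimality of the tree: the parent edges alone connect V, so no other edge can be
  present.\<close>
lemma edge_is_parent_edge:
  assumes e: "e \<in> E"
  shows "\<exists>x. x \<in> V \<and> x \<noteq> 1 \<and> e = {parent x, x}"
proof (rule ccontr)
  assume ne: "\<not> ?thesis"
  have "{parent y, y} \<in> E - {e}" if "y \<in> V" "y \<noteq> 1" for y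
    using ne parent(1)[OF that] that by auto
  then have "reachable (E - {e}) u 1" if "u \<in> V" for u
    using reachable_root that by blast
  then have "connected_on V (E - {e})"
    unfolding connected_on_def reachable_def[symmetric] by (blast intro: reachable_sym reachable_trans)
  then show False using tree e by (simp add: is_tree_def)
qed

lemma edge_parent:
  assumes "{a, b} \<in> E"
  shows "(a \<in> V \<and> a \<noteq> 1 \<and> b = parent a) \<or> (b \<in> V \<and> b \<noteq> 1 \<and> a = parent b)"
  using edge_is_parent_edge[OF assms] by (auto simp: doubleton_eq_iff)

lemma edge_depth: "{a, b} \<in> E \<Longrightarrow> \<bar>int (depth a) - int (depth b)\<bar> \<le> 1"
  using edge_parent depth_parent by fastforce

definition ancestor :: "nat \<Rightarrow> nat \<Rightarrow> bool" where
  "ancestor a x \<longleftrightarrow> x \<in> V \<and> (\<exists>n\<le>depth x. a = (parent ^^ n) x)"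

definition ancestor_at :: "nat \<Rightarrow> nat \<Rightarrow> nat" where
  "ancestor_at x d = (parent ^^ (depth x - d)) x"

lemma funpow_parent:
  assumes "x \<in> V" "n \<le> depth x"
  shows "(parent ^^ n) x \<in> V" "depth ((parent ^^ n) x) = depth x - n"
proof -
  have "(parent ^^ n) x \<in> V \<and> depth ((parent ^^ n) x) = depth x - n" using assms(2)
  proof (induction n)
    case (Suc n)
    let ?y = "(parent ^^ n) x"
    have y: "?y \<in> V" "depth ?y = depth x - n" using Suc by auto
    then have "?y \<noteq> 1" using Suc.prems by auto
    then show ?case using parent(2) depth_parent y Suc.prems by simp
  qed (use assms(1) in simp)
  then show "(parent ^^ n) x \<in> V" "depth ((parent ^^ n) x) = depth x - n" by auto
qed

lemma ancestor_refl: "x \<in> V \<Longrightarrow> ancestor x x"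
  unfolding ancestor_def by (auto intro: exI[of _ 0])

lemma ancestorD:
  assumes "ancestor a x"
  shows "a \<in> V" "x \<in> V" "depth a \<le> depth x" "a = ancestor_at x (depth a)"
proof -
  obtain n where n: "x \<in> V" "n \<le> depth x" "a = (parent ^^ n) x"
    using assms unfolding ancestor_def by blast
  show "a \<in> V" "x \<in> V" "depth a \<le> depth x" using funpow_parent[OF n(1,2)] n by auto
  have "depth x - depth a = n" using funpow_parent[OF n(1,2)] n by simp
  then show "a = ancestor_at x (depth a)" using n by (simp add: ancestor_at_def)
qed

lemma ancestor_at:
  assumes "x \<in> V" "d \<le> depth x"
  shows "ancestor (ancestor_at x d) x" "depth (ancestor_at x d) = d"
  using assms funpow_parent[OF assms(1), of "depth x - d"]
  unfolding ancestor_def ancestor_at_def by (auto intro: exI[of _ "depth x - d"])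

lemma ancestor_at_depth: "ancestor_at x (depth x) = x"
  by (simp add: ancestor_at_def)

lemma ancestor_trans: assumes "ancestor a b" "ancestor b c" shows "ancestor a c"
proof -
  obtain n where n: "b \<in> V" "n \<le> depth b" "a = (parent ^^ n) b"
    using assms(1) unfolding ancestor_def by blast
  obtain n' where n': "c \<in> V" "n' \<le> depth c" "b = (parent ^^ n') c"
    using assms(2) unfolding ancestor_def by blast
  have "n + n' \<le> depth c" using funpow_parent[OF n'(1,2)] n n' by simp
  moreover have "a = (parent ^^ (n + n')) c" using n n' by (simp add: funpow_add)
  ultimately show ?thesis using n' unfolding ancestor_def by blast
qed

lemma ancestor_eq: "ancestor a x \<Longrightarrow> ancestor b x \<Longrightarrow> depth a = depth b \<Longrightarrow> a = b"
  using ancestorD(4) by metis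

lemma ancestor_linear:
  assumes "ancestor a x" "ancestor b x" "depth a \<le> depth b"
  shows "ancestor a b"
proof -
  have db: "depth b \<le> depth x" using ancestorD[OF assms(2)] by auto
  have a: "a = (parent ^^ (depth x - depth a)) x" and b: "b = (parent ^^ (depth x - depth b)) x"
    using ancestorD(4)[OF assms(1)] ancestorD(4)[OF assms(2)] by (simp_all add: ancestor_at_def)
  have "depth x - depth a = (depth b - depth a) + (depth x - depth b)" using assms(3) db by simp
  then have "a = (parent ^^ (depth b - depth a)) b" using a b by (simp add: funpow_add)
  then show ?thesis
    using ancestorD(1)[OF assms(2)] unfolding ancestor_def by (auto intro: exI[of _ "depth b - depth a"])
qed

lemma ancestor_parent: "x \<in> V \<Longrightarrow> x \<noteq> 1 \<Longrightarrow> ancestor (parent x) x"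
  using depth_parent unfolding ancestor_def by (intro conjI exI[of _ 1]) auto

lemma ancestor_cases:
  assumes "x \<in> V" "x \<noteq> 1" "ancestor a x"
  shows "a = x \<or> ancestor a (parent x)"
proof -
  obtain n where n: "n \<le> depth x" "a = (parent ^^ n) x" using assms(3) unfolding ancestor_def by blast
  show ?thesis
  proof (cases n)
    case (Suc k)
    then have "a = (parent ^^ k) (parent x)" using n by (simp add: funpow_Suc_right del: funpow.simps)
    moreover have "k \<le> depth (parent x)" using depth_parent[OF assms(1,2)] n Suc by simp
    ultimately show ?thesis using parent(2)[OF assms(1,2)] unfolding ancestor_def by blast
  qed (use n in simp)
qed

lemma ancestor_at_ancestor:
  assumes "ancestor b x" "d \<le> depth b"
  shows "ancestor_at x d = ancestor_at b d"
proof (rule ancestor_eq)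
  note b = ancestorD[OF assms(1)]
  show "ancestor (ancestor_at b d) x" using ancestor_trans[OF ancestor_at(1)[OF b(1) assms(2)] assms(1)] .
  show "ancestor (ancestor_at x d) x" using ancestor_at(1)[OF b(2)] b(3) assms(2) by simp
  show "depth (ancestor_at x d) = depth (ancestor_at b d)"
    using ancestor_at(2)[OF b(1) assms(2)] ancestor_at(2)[OF b(2)] b(3) assms(2) by simp
qed

lemma ancestor_root: "x \<in> V \<Longrightarrow> ancestor 1 x"
  using ancestor_at[of x 0] ancestorD(1) depth_eq_0 by (metis zero_le)

lemma ancestor_walk:
  assumes "ancestor a x"
  obtains p where "walk_of E p" "hd p = x" "last p = a" "length p = Suc (depth x - depth a)"
proof -
  define n where "n = depth x - depth a"
  have x: "x \<in> V" and an: "a = (parent ^^ n) x" and nle: "n \<le> depth x"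
    using ancestorD[OF assms] by (auto simp: ancestor_at_def n_def)
  define p where "p = map (\<lambda>k. (parent ^^ k) x) [0..<Suc n]"
  have "walk_of E p" unfolding walk_of_def
  proof (intro conjI allI impI)
    fix k assume "Suc k < length p"
    then have kn: "k < n" by (simp add: p_def)
    let ?y = "(parent ^^ k) x"
    have y: "?y \<in> V" "?y \<noteq> 1" using funpow_parent[OF x, of k] kn nle by auto
    have "{?y, parent ?y} \<in> E" using parent(1)[OF y] by (simp add: insert_commute)
    then show "{p ! k, p ! Suc k} \<in> E" using kn by (simp add: p_def nth_append del: upt_Suc)
  qed (simp add: p_def)
  moreover have "hd p = x" "last p = a" "length p = Suc n"
    using an by (simp_all add: p_def hd_map last_map del: upt_Suc)
  ultimately show ?thesis using that n_def by blast
qed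

lemma depth_diff_le_gdist:
  assumes "x \<in> V" "y \<in> V"
  shows "\<bar>int (depth x) - int (depth y)\<bar> \<le> int (gdist E x y)"
  using gdist_lipschitz[of E "\<lambda>z. int (depth z)", OF edge_depth]
    reachable_if_connected_on[OF connected assms] by auto

lemma gdist_ancestor:
  assumes "ancestor a x"
  shows "gdist E x a = depth x - depth a" "gdist E a x = depth x - depth a"
proof -
  obtain p where p: "walk_of E p" "hd p = x" "last p = a" "length p = Suc (depth x - depth a)"
    using ancestor_walk[OF assms] .
  have V: "a \<in> V" "x \<in> V" and le: "depth a \<le> depth x" using ancestorD[OF assms] by auto
  have "gdist E x a \<le> depth x - depth a" using gdist_le_length[OF p(1)] p by simp
  moreover have "int (depth x - depth a) \<le> int (gdist E x a)" using depth_diff_le_gdist[OF V(2,1)] le by simp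
  ultimately show "gdist E x a = depth x - depth a" by simp
  moreover have "gdist E x a = gdist E a x" using gdist_sym reachable_if_connected_on[OF connected V(2,1)] by simp
  ultimately show "gdist E a x = depth x - depth a" by simp
qed

lemma gdist_root: "x \<in> V \<Longrightarrow> gdist E 1 x = depth x"
  using gdist_ancestor(2)[OF ancestor_root] by simp

lemma ancestor_if_geodesic:
  "walk_of E p \<Longrightarrow> hd p = w \<Longrightarrow> last p = x \<Longrightarrow> w \<in> V \<Longrightarrow> depth w \<le> depth x \<Longrightarrow>
   length p = Suc (depth x - depth w) \<Longrightarrow> ancestor w x"
proof (induction p arbitrary: w rule: induct_list012)
  case (2 c)
  then show ?case using ancestor_refl by simp
next
  case (3 c b r)
  have e: "{w, b} \<in> E" and wp: "walk_of E (b # r)" using "3.prems" by (auto simp: walk_of_Cons_Cons)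
  have bV: "b \<in> V" using edge_in_V(2)[OF e] .
  have "\<bar>int (depth b) - int (depth x)\<bar> \<le> int (length (b # r)) - 1"
    using walk_lipschitz[of E "\<lambda>z. int (depth z)", OF edge_depth wp] "3.prems" by auto
  then have db: "depth b = Suc (depth w)" using edge_depth[OF e] "3.prems" by auto
  then have "w = parent b" "b \<noteq> 1" using edge_parent[OF e] depth_parent "3.prems"(4) by auto
  then have "ancestor w b" using ancestor_parent[OF bV] by simp
  moreover have "ancestor b x" using "3.IH"(2)[OF wp _ _ bV] "3.prems" db by auto
  ultimately show ?case by (rule ancestor_trans)
qed (simp add: walk_of_def)

lemma tree_anc_eq_ancestor_at:
  assumes "x \<in> V" "d \<le> depth x"
  shows "tree_anc m E x d = ancestor_at x d"
  unfolding tree_anc_def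
proof (rule the_equality)
  have a: "ancestor (ancestor_at x d) x" "depth (ancestor_at x d) = d" using ancestor_at[OF assms] by auto
  show "ancestor_at x d \<in> V \<and> gdist E 1 (ancestor_at x d) = d
      \<and> gdist E 1 (ancestor_at x d) + gdist E (ancestor_at x d) x = gdist E 1 x"
    using a ancestorD[OF a(1)] gdist_root gdist_ancestor(2)[OF a(1)] assms by auto
next
  fix w assume w: "w \<in> V \<and> gdist E 1 w = d \<and> gdist E 1 w + gdist E w x = gdist E 1 x"
  then have dw: "depth w = d" and g: "gdist E w x = depth x - d" using gdist_root assms by auto
  obtain p where p: "walk_of E p" "hd p = w" "last p = x" "length p = Suc (gdist E w x)"
    using shortest_walk[OF reachable_if_connected_on[OF connected _ assms(1)]] w by blast
  have "ancestor w x" using ancestor_if_geodesic[OF p(1-3)] w assms dw g p(4) by auto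
  then show "w = ancestor_at x d" using ancestorD(4) dw by metis
qed

end

subsection \<open>Entries of the stack\<close>

context odfs_tree begin

lemma stack_entry:
  assumes "i < m" "0 < k" "k < length (stack i)"
  shows "stack i ! k \<in> V" "stack i ! k \<noteq> 1"
proof -
  have x: "stack i ! k \<in> set (stack i)" using assms by simp
  then show "stack i ! k \<in> V" using stack_invD(2)[of i] assms(1) by (meson less_imp_le subsetD)
  show "stack i ! k \<noteq> 1"
  proof (cases i)
    case 0 then show ?thesis using assms by (simp add: odfs_0)
  next
    case (Suc i')
    then have "1 \<in> visited i" using cur_visited_later[of 0 i] assms odfs_0 by simp
    then show ?thesis using stack_invD(1)[of i] assms(1) x by (metis disjoint_iff less_imp_le)
  qed
qed

lemma length_stack_Suc: "i < m \<Longrightarrow> length (stack (Suc i)) = card (fresh i) + length (stack i) - 1"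
  using stack_nonempty[of i] by (cases "stack i") (simp_all add: odfs_Suc)

lemma cur_Suc_push:
  assumes "i < m" "fresh i \<noteq> {}"
  shows "cur (Suc i) \<in> fresh i" "parent (cur (Suc i)) = cur i" "cur (Suc i) \<in> V" "cur (Suc i) \<noteq> 1"
    "length (stack i) \<le> length (stack (Suc i))"
proof -
  have "cur (Suc i) = hd (sorted_list_of_set (fresh i))"
    using assms finite_fresh by (simp add: cur_eq_hd odfs_Suc)
  then show c: "cur (Suc i) \<in> fresh i" using assms finite_fresh
    by (metis hd_in_set set_sorted_list_of_set sorted_list_of_set_eq_Nil_iff)
  show "parent (cur (Suc i)) = cur i" "cur (Suc i) \<in> V" "cur (Suc i) \<noteq> 1"
    using parent_eq[OF assms(1) c] fresh_facts[OF assms(1) c] by simp_all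
  show "length (stack i) \<le> length (stack (Suc i))"
  proof -
    have "0 < card (fresh i)" using assms(2) finite_fresh by (simp add: card_gt_0_iff)
    then show ?thesis using length_stack_Suc[OF assms(1)] by linarith
  qed
qed

lemma cur_Suc_pop:
  assumes "Suc i < m" "fresh i = {}"
  shows "stack (Suc i) = tl (stack i)" "1 < length (stack i)" "cur (Suc i) = stack i ! 1"
    "cur (Suc i) \<in> V" "cur (Suc i) \<noteq> 1"
proof -
  show S: "stack (Suc i) = tl (stack i)" using assms(2) by (simp add: odfs_Suc)
  then show L: "1 < length (stack i)" using stack_nonempty[OF assms(1)] by (cases "stack i") auto
  show c: "cur (Suc i) = stack i ! 1" using L by (cases "stack i") (simp_all add: cur_eq_hd S hd_conv_nth)
  show "cur (Suc i) \<in> V" "cur (Suc i) \<noteq> 1" unfolding c using stack_entry[of i 1] assms(1) L by simp_all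
qed

definition size_at :: "nat \<Rightarrow> nat" where
  "size_at x = length (stack (time x))"

lemma size_at_cur: "i < m \<Longrightarrow> size_at (cur i) = length (stack i)"
  by (simp add: size_at_def time_cur)

text \<open>An entry x at position k > 0 of stack i, with n = length (stack i) - k entries at or below it,
  was pushed when its parent p, a proper ancestor of cur i, was visited. At that time the stack
  held at most n entries, while at the visit of the child of p on the path to cur i it held more
  than n.\<close>
definition pending_inv :: "nat \<Rightarrow> bool" where
  "pending_inv i \<longleftrightarrow> (\<forall>k. 0 < k \<and> k < length (stack i) \<longrightarrow>
     (let p = parent (stack i ! k) in
      ancestor p (cur i) \<and> depth p < depth (cur i)
      \<and> length (stack i) - k < size_at (ancestor_at (cur i) (Suc (depth p)))
      \<and> size_at p \<le> length (stack i) - k))"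

definition monotone_inv :: "nat \<Rightarrow> bool" where
  "monotone_inv i \<longleftrightarrow> (\<forall>a b. ancestor a b \<longrightarrow> ancestor b (cur i) \<longrightarrow> size_at a \<le> size_at b)"

lemma pending_invD:
  assumes "pending_inv i" "0 < k" "k < length (stack i)"
  shows "ancestor (parent (stack i ! k)) (cur i)" "depth (parent (stack i ! k)) < depth (cur i)"
    "length (stack i) - k < size_at (ancestor_at (cur i) (Suc (depth (parent (stack i ! k)))))"
    "size_at (parent (stack i ! k)) \<le> length (stack i) - k"
  using assms unfolding pending_inv_def Let_def by blast+

lemma invariants_0: "pending_inv 0" "monotone_inv 0"
proof -
  show "pending_inv 0" unfolding pending_inv_def by (auto simp: odfs_0)
  have "a = 1" if "ancestor a 1" for a
    using ancestorD[OF that] depth_eq_0 by simp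
  then show "monotone_inv 0" unfolding monotone_inv_def odfs_0 by (metis order_refl)
qed

lemma pending_inv_Suc_push:
  assumes i: "Suc i < m" and fr: "fresh i \<noteq> {}" and P: "pending_inv i"
  shows "pending_inv (Suc i)"
  unfolding pending_inv_def Let_def
proof (intro allI impI)
  fix k assume k: "0 < k \<and> k < length (stack (Suc i))"
  have im: "i < m" using i by simp
  define N where "N = sorted_list_of_set (fresh i)"
  let ?v = "cur (Suc i)"
  have S: "stack (Suc i) = N @ tl (stack i)" by (simp add: odfs_Suc N_def)
  have lenS: "length (stack (Suc i)) = length N + length (stack i) - 1"
    using length_stack_Suc[OF im] finite_fresh by (simp add: N_def)
  note v = cur_Suc_push[OF im fr]
  have av: "ancestor (cur i) ?v" and dv: "depth ?v = Suc (depth (cur i))"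
    using ancestor_parent[OF v(3,4)] depth_parent[OF v(3,4)] v(2) by simp_all
  let ?p = "parent (stack (Suc i) ! k)"
  show "ancestor ?p ?v \<and> depth ?p < depth ?v
    \<and> length (stack (Suc i)) - k < size_at (ancestor_at ?v (Suc (depth ?p)))
    \<and> size_at ?p \<le> length (stack (Suc i)) - k"
  proof (cases "k < length N")
    case True
    then have "stack (Suc i) ! k \<in> fresh i"
      using nth_mem[OF True] finite_fresh by (simp add: S nth_append N_def)
    then have "?p = cur i" using parent_eq[OF im] by simp
    then show ?thesis
      using av dv size_at_cur[OF i] size_at_cur[OF im] ancestor_at_depth[of ?v] lenS True k
      by auto
  next
    case False
    define k' where "k' = Suc (k - length N)"
    have k': "0 < k'" "k' < length (stack i)" using k False lenS by (auto simp: k'_def)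
    have x: "stack (Suc i) ! k = stack i ! k'"
      using False k stack_nonempty[OF im] by (cases "stack i") (auto simp: S nth_append k'_def)
    note pk = pending_invD[OF P k', folded x]
    have "ancestor_at ?v (Suc (depth ?p)) = ancestor_at (cur i) (Suc (depth ?p))"
      using ancestor_at_ancestor[OF av] pk(2) by simp
    moreover have "length (stack i) - k' = length (stack (Suc i)) - k"
      using lenS False k by (simp add: k'_def)
    ultimately show ?thesis using pk ancestor_trans[OF pk(1) av] dv by simp
  qed
qed

lemma monotone_inv_Suc_push:
  assumes i: "Suc i < m" and fr: "fresh i \<noteq> {}" and M: "monotone_inv i"
  shows "monotone_inv (Suc i)"
  unfolding monotone_inv_def
proof (intro allI impI)
  fix a b assume ab: "ancestor a b" "ancestor b (cur (Suc i))"
  have im: "i < m" using i by simp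
  note v = cur_Suc_push[OF im fr]
  consider "b = cur (Suc i)" "a = cur (Suc i)" | "b = cur (Suc i)" "ancestor a (cur i)" | "ancestor b (cur i)"
    using ancestor_cases[OF v(3,4)] ab v(2) by metis
  then show "size_at a \<le> size_at b"
  proof cases
    case 2
    then have "size_at a \<le> size_at (cur i)"
      using M ancestor_refl[OF cur_in_V[OF im]] unfolding monotone_inv_def by blast
    then show ?thesis using 2 v(5) size_at_cur[OF i] size_at_cur[OF im] by simp
  qed (use M ab in \<open>auto simp: monotone_inv_def\<close>)
qed

lemma parent_second_entry:
  assumes i: "Suc i < m" and fr: "fresh i = {}" and P: "pending_inv i"
  defines "q \<equiv> parent (cur (Suc i))"
  shows "ancestor q (cur i)" "depth q < depth (cur i)"
    "length (stack i) - 1 < size_at (ancestor_at (cur i) (Suc (depth q)))"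
    "size_at q \<le> length (stack i) - 1"
  using pending_invD[OF P _ cur_Suc_pop(2)[OF i fr]] unfolding q_def cur_Suc_pop(3)[OF i fr] by auto

text \<open>An ancestor of cur i strictly below the child u of q towards cur i would have u as an
  ancestor, hence a stack at least as large as that of u.\<close>
lemma parent_depth_le_if_smaller:
  assumes i: "i < m" and M: "monotone_inv i" and p: "ancestor p (cur i)"
    and q: "ancestor q (cur i)" "depth q < depth (cur i)"
    and smaller: "size_at p < size_at (ancestor_at (cur i) (Suc (depth q)))"
  shows "depth p \<le> depth q"
proof (rule ccontr)
  assume deep: "\<not> depth p \<le> depth q"
  let ?u = "ancestor_at (cur i) (Suc (depth q))"
  have u: "ancestor ?u (cur i)" "depth ?u = Suc (depth q)"
    using ancestor_at[OF cur_in_V[OF i], of "Suc (depth q)"] q(2) by auto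
  have "ancestor ?u p" using ancestor_linear[OF u(1) p] u(2) deep by simp
  then have "size_at ?u \<le> size_at p" using M p unfolding monotone_inv_def by blast
  then show False using smaller by simp
qed

lemma pending_inv_Suc_pop:
  assumes i: "Suc i < m" and fr: "fresh i = {}" and P: "pending_inv i" and M: "monotone_inv i"
  shows "pending_inv (Suc i)"
  unfolding pending_inv_def Let_def
proof (intro allI impI)
  fix k assume k: "0 < k \<and> k < length (stack (Suc i))"
  have im: "i < m" using i by simp
  let ?v = "cur (Suc i)" and ?L = "length (stack i)"
  define q where "q = parent ?v"
  note pop = cur_Suc_pop[OF i fr]
  note pq = parent_second_entry[OF i fr P, folded q_def]
  have lenS: "length (stack (Suc i)) = ?L - 1" by (simp add: pop(1))
  have aqv: "ancestor q ?v" and dv: "depth ?v = Suc (depth q)"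
    using ancestor_parent[OF pop(4,5)] depth_parent[OF pop(4,5)] by (simp_all add: q_def)
  have x: "stack (Suc i) ! k = stack i ! Suc k" using stack_nonempty[OF im] by (cases "stack i") (simp_all add: pop(1))
  let ?p = "parent (stack (Suc i) ! k)"
  have pk: "ancestor ?p (cur i)" "depth ?p < depth (cur i)"
    "?L - Suc k < size_at (ancestor_at (cur i) (Suc (depth ?p)))" "size_at ?p \<le> ?L - Suc k"
    using pending_invD[OF P _, of "Suc k", folded x] k lenS by auto
  have le: "depth ?p \<le> depth q"
    using parent_depth_le_if_smaller[OF im M pk(1) pq(1,2)] pk(4) pq(3) k lenS by linarith
  have apq: "ancestor ?p q" using ancestor_linear[OF pk(1) pq(1) le] .
  have "?L - 1 - k < size_at (ancestor_at ?v (Suc (depth ?p)))"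
  proof (cases "depth ?p = depth q")
    case True
    then show ?thesis using ancestor_at_depth[of ?v] dv size_at_cur[OF i] lenS k by (simp; arith)
  next
    case False
    then have "Suc (depth ?p) \<le> depth q" using le by simp
    then have "ancestor_at ?v (Suc (depth ?p)) = ancestor_at (cur i) (Suc (depth ?p))"
      using ancestor_at_ancestor[OF aqv] ancestor_at_ancestor[OF pq(1)] by simp
    then show ?thesis using pk(3) by simp
  qed
  then show "ancestor ?p ?v \<and> depth ?p < depth ?v
    \<and> length (stack (Suc i)) - k < size_at (ancestor_at ?v (Suc (depth ?p)))
    \<and> size_at ?p \<le> length (stack (Suc i)) - k"
    using ancestor_trans[OF apq aqv] le dv pk(4) lenS by simp
qed

lemma monotone_inv_Suc_pop:
  assumes i: "Suc i < m" and fr: "fresh i = {}" and P: "pending_inv i" and M: "monotone_inv i"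
  shows "monotone_inv (Suc i)"
  unfolding monotone_inv_def
proof (intro allI impI)
  fix a b assume ab: "ancestor a b" "ancestor b (cur (Suc i))"
  define q where "q = parent (cur (Suc i))"
  note pop = cur_Suc_pop[OF i fr]
  note pq = parent_second_entry[OF i fr P, folded q_def]
  have mono: "size_at a' \<le> size_at b'" if "ancestor a' b'" "ancestor b' (cur i)" for a' b'
    using M that unfolding monotone_inv_def by blast
  consider "b = cur (Suc i)" "a = cur (Suc i)" | "b = cur (Suc i)" "ancestor a q" | "ancestor b q"
    using ancestor_cases[OF pop(4,5)] ab by (metis q_def)
  then show "size_at a \<le> size_at b"
  proof cases
    case 2 then show ?thesis using mono[OF 2(2) pq(1)] pq(4) size_at_cur[OF i] pop(1) by simp
  next
    case 3 then show ?thesis using mono[OF ab(1) ancestor_trans[OF _ pq(1)]] by blast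
  qed simp
qed

lemma invariants: "i < m \<Longrightarrow> pending_inv i \<and> monotone_inv i"
proof (induction i)
  case (Suc i)
  then show ?case
    using pending_inv_Suc_push monotone_inv_Suc_push pending_inv_Suc_pop monotone_inv_Suc_pop
    by (cases "fresh i = {}") auto
qed (simp add: invariants_0)

lemma gdist_ancestors:
  assumes "ancestor a x" "ancestor b x"
  shows "int (gdist E a b) = \<bar>int (depth a) - int (depth b)\<bar>"
proof (cases "depth a \<le> depth b")
  case True
  then show ?thesis using gdist_ancestor(2)[OF ancestor_linear[OF assms True]] by simp
next
  case False
  then show ?thesis using gdist_ancestor(1)[OF ancestor_linear[OF assms(2,1)]] by simp
qed

text \<open>The parent p of the entry is an ancestor of cur i, and the invariant compares the stack
  sizes at the visits of p and of its child towards cur i with j; this pins depth p to within 2M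
  of 2j - 1.\<close>
lemma stack_entry_near_ancestor:
  fixes M :: real
  assumes i: "i < m" and j: "0 < j" "j < length (stack i)" "2 * j \<le> depth (cur i)"
    and M: "\<And>y. y \<in> V \<Longrightarrow> \<bar>real (size_at y) - 1 - real (depth y) / 2\<bar> \<le> M"
  shows "rev (stack i) ! (j - 1) \<in> V"
    "real (gdist E (rev (stack i) ! (j - 1)) (ancestor_at (cur i) (2 * j - 1))) \<le> 2 * M + 1"
proof -
  define k where "k = length (stack i) - j"
  define x where "x = stack i ! k"
  define p where "p = parent x"
  define u where "u = ancestor_at (cur i) (Suc (depth p))"
  define a where "a = ancestor_at (cur i) (2 * j - 1)"
  have k: "0 < k" "k < length (stack i)" and jk: "length (stack i) - k = j" using j by (auto simp: k_def)
  have x_eq: "rev (stack i) ! (j - 1) = x" using j by (simp add: rev_nth k_def x_def)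
  have xV: "x \<in> V" "x \<noteq> 1" using stack_entry[OF i k] by (simp_all add: x_def)
  then show "rev (stack i) ! (j - 1) \<in> V" using x_eq by simp
  note pk = pending_invD[OF conjunct1[OF invariants[OF i]] k, folded x_def p_def u_def, unfolded jk]
  have ci: "cur i \<in> V" using cur_in_V[OF i] .
  have u: "ancestor u (cur i)" "depth u = Suc (depth p)"
    using ancestor_at[OF ci, of "Suc (depth p)"] pk(2) by (auto simp: u_def)
  have aa: "ancestor a (cur i)" "depth a = 2 * j - 1"
    using ancestor_at[OF ci, of "2 * j - 1"] j(3) by (auto simp: a_def)
  have "real j + 1 \<le> real (size_at u)" "real (depth u) = real (depth p) + 1"
    using pk(3) u(2) by (simp_all add: u_def)
  then have "2 * real j - 1 - real (depth p) \<le> 2 * M"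
    using abs_le_D1[OF M[OF ancestorD(1)[OF u(1)]]] by linarith
  moreover have "real (size_at p) \<le> real j" using pk(4) by simp
  then have "real (depth p) - (2 * real j - 1) \<le> 2 * M"
    using abs_le_D2[OF M[OF ancestorD(1)[OF pk(1)]]] by linarith
  moreover have "real (gdist E p a) = \<bar>real (depth p) - real (depth a)\<bar>"
    using arg_cong[OF gdist_ancestors[OF pk(1) aa(1)], of real_of_int] by simp
  moreover have "real (depth a) = 2 * real j - 1" using aa(2) j(1) by (simp add: of_nat_diff)
  moreover have "gdist E x a \<le> gdist E x p + gdist E p a"
    using gdist_triangle reachable_if_connected_on[OF connected] xV(1) ancestorD(1)[OF pk(1)]
      ancestorD(1)[OF aa(1)] by blast
  moreover have "gdist E x p = 1"
    using gdist_ancestor(1)[OF ancestor_parent[OF xV]] depth_parent[OF xV] by (simp add: p_def)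
  ultimately show "real (gdist E (rev (stack i) ! (j - 1)) (ancestor_at (cur i) (2 * j - 1))) \<le> 2 * M + 1"
    unfolding x_eq a_def[symmetric] by linarith
qed

subsection \<open>The graphs G^X and G^H\<close>

lemma dfs_X_eq: "i < m \<Longrightarrow> dfs_X m E i = int (length (stack i)) - 1"
  by (simp add: dfs_X_def)

lemma dfs_H_eq: "i < m \<Longrightarrow> dfs_H m E i = depth (cur i)"
  using gdist_root[OF cur_in_V] by (simp add: dfs_H_def)

lemma under_X_point:
  assumes "(i, j) \<in> under Q (\<lambda>x. real_of_int (dfs_X m E x))"
  shows "i < m" "0 < j" "j < length (stack i)"
proof -
  have j: "0 < j" "real j \<le> real_of_int (dfs_X m E i)" using assms by (auto simp: under_def)
  then show i: "i < m" by (cases "i < m") (simp_all add: dfs_X_def)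
  show "0 < j" "j < length (stack i)" using j dfs_X_eq[OF i] by simp_all
qed

lemma under_H_point:
  "(i, j) \<in> under Q (\<lambda>x. real (dfs_H m E x) / 2) \<longleftrightarrow> (i, j) \<in> Q \<and> 0 < 2 * j \<and> 2 * j \<le> dfs_H m E i"
  by (auto simp: under_def)

definition X_end :: "nat \<times> nat \<Rightarrow> nat" where
  "X_end s = rev (stack (fst s)) ! (snd s - 1)"

definition H_end :: "nat \<times> nat \<Rightarrow> nat" where
  "H_end s = ancestor_at (cur (fst s)) (2 * snd s - 1)"

lemma GX_eq: "GX m E Q = E \<union> (\<lambda>s. {cur (fst s), X_end s}) ` under Q (\<lambda>x. real_of_int (dfs_X m E x))"
  unfolding GX_def X_end_def by force

lemma GH_eq:
  assumes "under Q (\<lambda>x. real_of_int (dfs_X m E x)) = under Q (\<lambda>x. real (dfs_H m E x) / 2)"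
  shows "GH m E Q = E \<union> (\<lambda>s. {cur (fst s), H_end s}) ` under Q (\<lambda>x. real_of_int (dfs_X m E x))"
proof -
  have "tree_anc m E (cur i) (2 * j - 1) = ancestor_at (cur i) (2 * j - 1)"
    if ij: "(i, j) \<in> under Q (\<lambda>x. real_of_int (dfs_X m E x))" for i j
  proof -
    have i: "i < m" using under_X_point[OF ij] by simp
    have "2 * j \<le> depth (cur i)" using ij i unfolding assms under_H_point by (simp add: dfs_H_eq)
    then show ?thesis by (intro tree_anc_eq_ancestor_at[OF cur_in_V[OF i]]) simp
  qed
  then have "(\<lambda>s. {cur (fst s), tree_anc m E (cur (fst s)) (2 * snd s - 1)}) ` under Q (\<lambda>x. real_of_int (dfs_X m E x))
      = (\<lambda>s. {cur (fst s), H_end s}) ` under Q (\<lambda>x. real_of_int (dfs_X m E x))"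
    unfolding H_end_def by (intro image_cong) auto
  moreover have "GH m E Q = E \<union> (\<lambda>s. {cur (fst s), tree_anc m E (cur (fst s)) (2 * snd s - 1)}) `
      under Q (\<lambda>x. real_of_int (dfs_X m E x))"
    unfolding GH_def under_H_point[symmetric] assms by force
  ultimately show ?thesis by simp
qed

lemma discrepancy_le_Max:
  assumes "y \<in> V"
  shows "\<bar>real (size_at y) - 1 - real (depth y) / 2\<bar>
    \<le> Max ((\<lambda>i. \<bar>real_of_int (dfs_X m E i) - real (dfs_H m E i) / 2\<bar>) ` {..<m})"
proof -
  have "\<bar>real_of_int (dfs_X m E (time y)) - real (dfs_H m E (time y)) / 2\<bar>
      \<le> Max ((\<lambda>i. \<bar>real_of_int (dfs_X m E i) - real (dfs_H m E i) / 2\<bar>) ` {..<m})"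
    using time_less[OF assms] by (intro Max_ge) auto
  then show ?thesis using dfs_X_eq dfs_H_eq time_less[OF assms] cur_time[OF assms] by (simp add: size_at_def)
qed

lemma exchanged_edge:
  assumes XH: "under Q (\<lambda>x. real_of_int (dfs_X m E x)) = under Q (\<lambda>x. real (dfs_H m E x) / 2)"
    and s: "s \<in> under Q (\<lambda>x. real_of_int (dfs_X m E x))"
    and M: "\<And>y. y \<in> V \<Longrightarrow> \<bar>real (size_at y) - 1 - real (depth y) / 2\<bar> \<le> M"
  shows "cur (fst s) \<in> V \<and> X_end s \<in> V \<and> H_end s \<in> V" "1 + real (gdist E (X_end s) (H_end s)) \<le> 2 * M + 2"
proof -
  obtain i j where ij: "s = (i, j)" by fastforce
  have i: "i < m" "0 < j" "j < length (stack i)" using under_X_point s by (simp_all add: ij)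
  have d: "2 * j \<le> depth (cur i)" using s i(1) unfolding XH ij under_H_point by (simp add: dfs_H_eq)
  note near = stack_entry_near_ancestor[OF i d M]
  have "H_end s \<in> V" using ancestorD(1)[OF ancestor_at(1)[OF cur_in_V[OF i(1)]]] d by (simp add: H_end_def ij)
  then show "cur (fst s) \<in> V \<and> X_end s \<in> V \<and> H_end s \<in> V"
    using near(1) cur_in_V[OF i(1)] by (simp add: X_end_def ij)
  show "1 + real (gdist E (X_end s) (H_end s)) \<le> 2 * M + 2" using near(2) by (simp add: X_end_def H_end_def ij)
qed

end

theorem lemma13:
  fixes m :: nat and E :: "nat set set" and Q :: "(nat \<times> nat) set"
  assumes "is_tree m E"
    and "finite Q"
    and "under Q (\<lambda>x. real_of_int (dfs_X m E x)) = under Q (\<lambda>x. real (dfs_H m E x) / 2)"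
  shows "dGH {1..m} (\<lambda>u v. real (gdist (GX m E Q) u v)) 1
             {1..m} (\<lambda>u v. real (gdist (GH m E Q) u v)) 1
         \<le> real (card (under Q (\<lambda>x. real_of_int (dfs_X m E x))))
             * (Max ((\<lambda>i. \<bar>real_of_int (dfs_X m E i) - real (dfs_H m E i) / 2\<bar>) ` {..<m}) + 2)"
proof -
  interpret odfs_tree m E by unfold_locales (rule assms(1))
  define S where "S = under Q (\<lambda>x. real_of_int (dfs_X m E x))"
  define M where "M = Max ((\<lambda>i. \<bar>real_of_int (dfs_X m E i) - real (dfs_H m E i) / 2\<bar>) ` {..<m})"
  define D where "D = (2 * M + 2) * real (card S)"
  note edge = exchanged_edge[OF assms(3) _ discrepancy_le_Max, folded S_def M_def]
  have "finite S" using assms(2) by (auto simp: S_def under_def intro: finite_subset)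
  then have "\<bar>real (gdist (GX m E Q) x y) - real (gdist (GH m E Q) x y)\<bar> \<le> D"
    if "x \<in> V" "y \<in> V" for x y
    unfolding GX_eq GH_eq[OF assms(3)] D_def S_def[symmetric]
    by (rule gdist_exchange_edges[OF _ connected edge that])
  then interpret metric_distortion V "\<lambda>u v. real (gdist (GX m E Q) u v)" "\<lambda>u v. real (gdist (GH m E Q) u v)" D
    using pseudometric_gdist connected_on_mono[OF connected] m_pos
    by unfold_locales (auto simp: GX_def GH_def)
  have "dGH V (\<lambda>u v. real (gdist (GX m E Q) u v)) 1 V (\<lambda>u v. real (gdist (GH m E Q) u v)) 1 \<le> D / 2"
    using dGH_le_half_distortion m_pos by simp
  also have "\<dots> \<le> real (card S) * (M + 2)"
    using discrepancy_le_Max[of 1] m_pos by (simp add: D_def M_def field_simps)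
  finally show ?thesis unfolding S_def M_def .
qed

end
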